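(* Let $\Omega\subseteq\mathbb{R}^n$ be open, let $\mathcal{F}\subseteq\mathbb{H}(\Omega)$, and define $\varphi,\psi:\Omega\to\overline{\mathbb{R}}$ by $\varphi(x)=\inf\{z\in f(x):f\in\mathcal{F}\}$ and $\psi(x)=\sup\{z\in f(x):f\in\mathcal{F}\}$. Then $\inf\mathcal{F}=F(I(\varphi))$ and $\sup\mathcal{F}=F(S(\psi))$, where the infimum and supremum are taken in $\mathbb{H}(\Omega)$ with respect to $\le$.
   Context: $\overline{\mathbb{R}}=\mathbb{R}\cup\{\pm\infty\}$, $\mathbb{I}\overline{\mathbb{R}}$ is the set of closed intervals $[\underline a,\overline a]$ with $\underline a\le\overline a$ in $\overline{\mathbb{R}}$, $a\in\overline{\mathbb{R}}$ identified with $[a,a]$. $\mathbb{A}(\Omega)$ is the set of functions $\Omega\to\mathbb{I}\overline{\mathbb{R}}$. Partial order: $[\underline a,\overline a]\le[\underline b,\overline b]$ iff $\underline a\le\underline b$ and $\overline a\le\overline b$; $f\le g$ iff $f(x)\le g(x)$ for all $x$. $B_\delta(x)=\{y\in\Omega:\|x-y\|<\delta\}$. For $f\in\mathbb{A}(\Omega)$: $I(f)(x)=\sup_{\delta>0}\inf\{z\in f(y):y\in B_\delta(x)\}$, $S(f)(x)=\inf_{\delta>0}\sup\{z\in f(y):y\in B_\delta(x)\}$, $F(f)(x)=[I(f)(x),S(f)(x)]$. $f$ is H-continuous if for every $g\in\mathbb{A}(\Omega)$ with $g(x)\subseteq f(x)$ for all $x$ one has $F(g)=f$; $\mathbb{H}(\Omega)$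 is the set of H-continuous functions (it is order complete with respect to $\le$). *)

theory Defs
  imports "HOL-Analysis.Analysis"
begin

text \<open>Interval-valued functions on \<Omega>: an interval [a,b] in the extended reals is the pair (a,b)
  with a \<le> b. Functions are taken extensionally: outside \<Omega> they have the dummy value (0,0).\<close>

type_synonym 'a ifun = "'a \<Rightarrow> ereal \<times> ereal"

definition A :: "'a set \<Rightarrow> 'a ifun set" where
  "A \<Omega> = {f. (\<forall>x\<in>\<Omega>. fst (f x) \<le> snd (f x)) \<and> (\<forall>x. x \<notin> \<Omega> \<longrightarrow> f x = (0, 0))}"

definition imem :: "ereal \<Rightarrow> ereal \<times> ereal \<Rightarrow> bool" where
  "imem z a \<longleftrightarrow> fst a \<le> z \<and> z \<le> snd a"

definition isubset :: "ereal \<times> ereal \<Rightarrow> ereal \<times> ereal \<Rightarrow> bool" where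
  "isubset a b \<longleftrightarrow> fst b \<le> fst a \<and> snd a \<le> snd b"

definition pt :: "'a set \<Rightarrow> ('a \<Rightarrow> ereal) \<Rightarrow> 'a ifun" where
  "pt \<Omega> \<phi> = (\<lambda>x. if x \<in> \<Omega> then (\<phi> x, \<phi> x) else (0, 0))"

definition Bd :: "'a::metric_space set \<Rightarrow> real \<Rightarrow> 'a \<Rightarrow> 'a set" where
  "Bd \<Omega> \<delta> x = {y \<in> \<Omega>. dist x y < \<delta>}"

definition Ilow :: "'a::metric_space set \<Rightarrow> 'a ifun \<Rightarrow> 'a \<Rightarrow> ereal" where
  "Ilow \<Omega> f x = (SUP \<delta>\<in>{0<..}. Inf {z. \<exists>y\<in>Bd \<Omega> \<delta> x. imem z (f y)})"

definition Supp :: "'a::metric_space set \<Rightarrow> 'a ifun \<Rightarrow> 'a \<Rightarrow> ereal" where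
  "Supp \<Omega> f x = (INF \<delta>\<in>{0<..}. Sup {z. \<exists>y\<in>Bd \<Omega> \<delta> x. imem z (f y)})"

definition Fop :: "'a::metric_space set \<Rightarrow> 'a ifun \<Rightarrow> 'a ifun" where
  "Fop \<Omega> f = (\<lambda>x. if x \<in> \<Omega> then (Ilow \<Omega> f x, Supp \<Omega> f x) else (0, 0))"

definition Hcont :: "'a::metric_space set \<Rightarrow> 'a ifun set" where
  "Hcont \<Omega> = {f \<in> A \<Omega>. \<forall>g\<in>A \<Omega>. (\<forall>x\<in>\<Omega>. isubset (g x) (f x)) \<longrightarrow> Fop \<Omega> g = f}"

definition ile :: "'a set \<Rightarrow> 'a ifun \<Rightarrow> 'a ifun \<Rightarrow> bool" where
  "ile \<Omega> f g \<longleftrightarrow> (\<forall>x\<in>\<Omega>. fst (f x) \<le> fst (g x) \<and> snd (f x) \<le> snd (g x))"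

definition is_inf_H :: "'a::metric_space set \<Rightarrow> 'a ifun set \<Rightarrow> 'a ifun \<Rightarrow> bool" where
  "is_inf_H \<Omega> \<F> h \<longleftrightarrow> h \<in> Hcont \<Omega> \<and> (\<forall>f\<in>\<F>. ile \<Omega> h f)
     \<and> (\<forall>g\<in>Hcont \<Omega>. (\<forall>f\<in>\<F>. ile \<Omega> g f) \<longrightarrow> ile \<Omega> g h)"

definition is_sup_H :: "'a::metric_space set \<Rightarrow> 'a ifun set \<Rightarrow> 'a ifun \<Rightarrow> bool" where
  "is_sup_H \<Omega> \<F> h \<longleftrightarrow> h \<in> Hcont \<Omega> \<and> (\<forall>f\<in>\<F>. ile \<Omega> f h)
     \<and> (\<forall>g\<in>Hcont \<Omega>. (\<forall>f\<in>\<F>. ile \<Omega> f g) \<longrightarrow> ile \<Omega> h g)"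

end

theory Submission
  imports Defs
begin

text \<open>Let \<open>I\<close> and \<open>S\<close> also denote the lower and upper envelopes of extended-real functions
  on \<Omega> (\<open>lower_envelope\<close>, \<open>upper_envelope\<close>). An interval function \<open>f = [f\<^sub>1, f\<^sub>2]\<close> is
  H-continuous iff \<open>I f\<^sub>2 = f\<^sub>1\<close> and \<open>S f\<^sub>1 = f\<^sub>2\<close>, and \<open>F [u, u] = [I u, S u]\<close> is H-continuous
  whenever \<open>I (S u) = u\<close>. For the infimum put \<open>a = I \<phi>\<close>. Every \<open>f \<in> \<F>\<close> satisfies \<open>a \<le> f\<^sub>1\<close>,
  hence \<open>S a \<le> S f\<^sub>1 = f\<^sub>2\<close> and \<open>I (S a) \<le> I f\<^sub>2 = f\<^sub>1\<close>; taking the infimum over \<open>\<F>\<close> gives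
  \<open>I (S a) \<le> \<phi>\<close>, so \<open>I (S a) = a\<close> by idempotence of \<open>I\<close>. Thus \<open>[a, S a]\<close> is an H-continuous
  lower bound of \<open>\<F>\<close>, and it dominates every other one \<open>g\<close> because \<open>g\<^sub>1 = I g\<^sub>1 \<le> I \<phi>\<close> and
  \<open>g\<^sub>2 = S g\<^sub>1\<close>. The supremum is dual.\<close>

definition lower_envelope :: "'a::metric_space set \<Rightarrow> ('a \<Rightarrow> ereal) \<Rightarrow> 'a \<Rightarrow> ereal" where
  "lower_envelope \<Omega> u x = (SUP \<delta>\<in>{0<..}. INF y\<in>Bd \<Omega> \<delta> x. u y)"

definition upper_envelope :: "'a::metric_space set \<Rightarrow> ('a \<Rightarrow> ereal) \<Rightarrow> 'a \<Rightarrow> ereal" where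
  "upper_envelope \<Omega> u x = (INF \<delta>\<in>{0<..}. SUP y\<in>Bd \<Omega> \<delta> x. u y)"

lemma lower_envelope_cong:
  "(\<And>y. y \<in> \<Omega> \<Longrightarrow> u y = v y) \<Longrightarrow> lower_envelope \<Omega> u x = lower_envelope \<Omega> v x"
  unfolding lower_envelope_def Bd_def by (intro SUP_cong INF_cong) auto

lemma upper_envelope_cong:
  "(\<And>y. y \<in> \<Omega> \<Longrightarrow> u y = v y) \<Longrightarrow> upper_envelope \<Omega> u x = upper_envelope \<Omega> v x"
  unfolding upper_envelope_def Bd_def by (intro SUP_cong INF_cong) auto

lemma lower_envelope_mono:
  "(\<And>y. y \<in> \<Omega> \<Longrightarrow> u y \<le> v y) \<Longrightarrow> lower_envelope \<Omega> u x \<le> lower_envelope \<Omega> v x"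
  unfolding lower_envelope_def
  by (intro SUP_mono' INF_superset_mono[OF order_refl]) (auto simp: Bd_def)

lemma upper_envelope_mono:
  "(\<And>y. y \<in> \<Omega> \<Longrightarrow> u y \<le> v y) \<Longrightarrow> upper_envelope \<Omega> u x \<le> upper_envelope \<Omega> v x"
  unfolding upper_envelope_def
  by (intro INF_mono' SUP_subset_mono[OF order_refl]) (auto simp: Bd_def)

lemma lower_envelope_le: "x \<in> \<Omega> \<Longrightarrow> lower_envelope \<Omega> u x \<le> u x"
  unfolding lower_envelope_def by (rule SUP_least) (auto intro!: INF_lower2 simp: Bd_def)

lemma upper_envelope_ge: "x \<in> \<Omega> \<Longrightarrow> u x \<le> upper_envelope \<Omega> u x"
  unfolding upper_envelope_def by (rule INF_greatest) (auto intro!: SUP_upper2 simp: Bd_def)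

lemma Bd_half_subset:
  assumes "y \<in> Bd \<Omega> (\<delta>/2) x"
  shows "Bd \<Omega> (\<delta>/2) y \<subseteq> Bd \<Omega> \<delta> x"
proof
  fix z assume z: "z \<in> Bd \<Omega> (\<delta>/2) y"
  have "dist x z \<le> dist x y + dist y z" by (rule dist_triangle)
  then show "z \<in> Bd \<Omega> \<delta> x" using assms z unfolding Bd_def by auto
qed

lemma lower_envelope_idem:
  assumes "x \<in> \<Omega>"
  shows "lower_envelope \<Omega> (lower_envelope \<Omega> u) x = lower_envelope \<Omega> u x"
proof (rule antisym)
  show "lower_envelope \<Omega> (lower_envelope \<Omega> u) x \<le> lower_envelope \<Omega> u x"
    by (intro lower_envelope_mono lower_envelope_le)
  show "lower_envelope \<Omega> u x \<le> lower_envelope \<Omega> (lower_envelope \<Omega> u) x"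
    unfolding lower_envelope_def[of \<Omega> u x]
  proof (rule SUP_least)
    fix \<delta> :: real assume "\<delta> \<in> {0<..}"
    then have \<delta>: "\<delta> > 0" by simp
    have "(INF y\<in>Bd \<Omega> \<delta> x. u y) \<le> (INF y\<in>Bd \<Omega> (\<delta>/2) x. lower_envelope \<Omega> u y)"
    proof (rule INF_greatest)
      fix y assume y: "y \<in> Bd \<Omega> (\<delta>/2) x"
      have "(INF y\<in>Bd \<Omega> \<delta> x. u y) \<le> (INF z\<in>Bd \<Omega> (\<delta>/2) y. u z)"
        by (rule INF_superset_mono[OF Bd_half_subset[OF y]]) auto
      also have "\<dots> \<le> lower_envelope \<Omega> u y"
        unfolding lower_envelope_def using \<delta> by (intro SUP_upper) auto
      finally show "(INF y\<in>Bd \<Omega> \<delta> x. u y) \<le> lower_envelope \<Omega> u y" .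
    qed
    also have "\<dots> \<le> lower_envelope \<Omega> (lower_envelope \<Omega> u) x"
      unfolding lower_envelope_def[of \<Omega> "lower_envelope \<Omega> u"] using \<delta> by (intro SUP_upper) auto
    finally show "(INF y\<in>Bd \<Omega> \<delta> x. u y) \<le> lower_envelope \<Omega> (lower_envelope \<Omega> u) x" .
  qed
qed

lemma upper_envelope_idem:
  assumes "x \<in> \<Omega>"
  shows "upper_envelope \<Omega> (upper_envelope \<Omega> u) x = upper_envelope \<Omega> u x"
proof (rule antisym)
  show "upper_envelope \<Omega> u x \<le> upper_envelope \<Omega> (upper_envelope \<Omega> u) x"
    by (intro upper_envelope_mono upper_envelope_ge)
  show "upper_envelope \<Omega> (upper_envelope \<Omega> u) x \<le> upper_envelope \<Omega> u x"
    unfolding upper_envelope_def[of \<Omega> u x]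
  proof (rule INF_greatest)
    fix \<delta> :: real assume "\<delta> \<in> {0<..}"
    then have \<delta>: "\<delta> > 0" by simp
    have "upper_envelope \<Omega> (upper_envelope \<Omega> u) x \<le> (SUP y\<in>Bd \<Omega> (\<delta>/2) x. upper_envelope \<Omega> u y)"
      unfolding upper_envelope_def[of \<Omega> "upper_envelope \<Omega> u"] using \<delta> by (intro INF_lower) auto
    also have "\<dots> \<le> (SUP y\<in>Bd \<Omega> \<delta> x. u y)"
    proof (rule SUP_least)
      fix y assume y: "y \<in> Bd \<Omega> (\<delta>/2) x"
      have "upper_envelope \<Omega> u y \<le> (SUP z\<in>Bd \<Omega> (\<delta>/2) y. u z)"
        unfolding upper_envelope_def using \<delta> by (intro INF_lower) auto
      also have "\<dots> \<le> (SUP y\<in>Bd \<Omega> \<delta> x. u y)"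
        by (rule SUP_subset_mono[OF Bd_half_subset[OF y]]) auto
      finally show "upper_envelope \<Omega> u y \<le> (SUP y\<in>Bd \<Omega> \<delta> x. u y)" .
    qed
    finally show "upper_envelope \<Omega> (upper_envelope \<Omega> u) x \<le> (SUP y\<in>Bd \<Omega> \<delta> x. u y)" .
  qed
qed

lemma lower_envelope_fixed:
  assumes "\<And>y. y \<in> \<Omega> \<Longrightarrow> u y = lower_envelope \<Omega> v y" and "x \<in> \<Omega>"
  shows "lower_envelope \<Omega> u x = u x"
  using lower_envelope_cong[of \<Omega> u "lower_envelope \<Omega> v" x] lower_envelope_idem assms by simp

lemma upper_envelope_fixed:
  assumes "\<And>y. y \<in> \<Omega> \<Longrightarrow> u y = upper_envelope \<Omega> v y" and "x \<in> \<Omega>"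
  shows "upper_envelope \<Omega> u x = u x"
  using upper_envelope_cong[of \<Omega> u "upper_envelope \<Omega> v" x] upper_envelope_idem assms by simp

lemma Inf_imem:
  assumes "\<And>i. i \<in> I \<Longrightarrow> fst (f i) \<le> snd (f i)"
  shows "Inf {z. \<exists>i\<in>I. imem z (f i)} = (INF i\<in>I. fst (f i))"
proof (rule antisym)
  show "Inf {z. \<exists>i\<in>I. imem z (f i)} \<le> (INF i\<in>I. fst (f i))"
    by (rule INF_greatest, rule Inf_lower) (use assms in \<open>auto simp: imem_def\<close>)
  show "(INF i\<in>I. fst (f i)) \<le> Inf {z. \<exists>i\<in>I. imem z (f i)}"
    by (rule Inf_greatest) (auto simp: imem_def intro: INF_lower2)
qed

lemma Sup_imem:
  assumes "\<And>i. i \<in> I \<Longrightarrow> fst (f i) \<le> snd (f i)"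
  shows "Sup {z. \<exists>i\<in>I. imem z (f i)} = (SUP i\<in>I. snd (f i))"
proof (rule antisym)
  show "(SUP i\<in>I. snd (f i)) \<le> Sup {z. \<exists>i\<in>I. imem z (f i)}"
    by (rule SUP_least, rule Sup_upper) (use assms in \<open>auto simp: imem_def\<close>)
  show "Sup {z. \<exists>i\<in>I. imem z (f i)} \<le> (SUP i\<in>I. snd (f i))"
    by (rule Sup_least) (auto simp: imem_def intro: SUP_upper2)
qed

lemma A_fst_le_snd: "f \<in> A \<Omega> \<Longrightarrow> x \<in> \<Omega> \<Longrightarrow> fst (f x) \<le> snd (f x)"
  unfolding A_def by auto

lemma pt_in_A: "pt \<Omega> u \<in> A \<Omega>"
  unfolding pt_def A_def by auto

lemma Ilow_eq_lower_envelope: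
  assumes "f \<in> A \<Omega>"
  shows "Ilow \<Omega> f x = lower_envelope \<Omega> (\<lambda>y. fst (f y)) x"
  using Inf_imem[of "Bd \<Omega> _ x" f] A_fst_le_snd[OF assms]
  unfolding Ilow_def lower_envelope_def by (simp add: Bd_def)

lemma Supp_eq_upper_envelope:
  assumes "f \<in> A \<Omega>"
  shows "Supp \<Omega> f x = upper_envelope \<Omega> (\<lambda>y. snd (f y)) x"
  using Sup_imem[of "Bd \<Omega> _ x" f] A_fst_le_snd[OF assms]
  unfolding Supp_def upper_envelope_def by (simp add: Bd_def)

lemma Ilow_pt: "Ilow \<Omega> (pt \<Omega> u) = lower_envelope \<Omega> u"
  by (rule ext) (simp add: Ilow_eq_lower_envelope[OF pt_in_A], rule lower_envelope_cong, simp add: pt_def)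

lemma Supp_pt: "Supp \<Omega> (pt \<Omega> u) = upper_envelope \<Omega> u"
  by (rule ext) (simp add: Supp_eq_upper_envelope[OF pt_in_A], rule upper_envelope_cong, simp add: pt_def)

lemma Fop_eq_envelopes:
  assumes "f \<in> A \<Omega>" and "x \<in> \<Omega>"
  shows "Fop \<Omega> f x = (lower_envelope \<Omega> (\<lambda>y. fst (f y)) x, upper_envelope \<Omega> (\<lambda>y. snd (f y)) x)"
  using assms by (simp add: Fop_def Ilow_eq_lower_envelope Supp_eq_upper_envelope)

lemma Fop_pt: "x \<in> \<Omega> \<Longrightarrow> Fop \<Omega> (pt \<Omega> u) x = (lower_envelope \<Omega> u x, upper_envelope \<Omega> u x)"
  by (simp add: Fop_def Ilow_pt Supp_pt)

lemma Hcont_iff: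
  "f \<in> Hcont \<Omega> \<longleftrightarrow> f \<in> A \<Omega> \<and>
     (\<forall>x\<in>\<Omega>. lower_envelope \<Omega> (\<lambda>y. snd (f y)) x = fst (f x)
           \<and> upper_envelope \<Omega> (\<lambda>y. fst (f y)) x = snd (f x))"
proof (intro iffI conjI ballI)
  assume f: "f \<in> Hcont \<Omega>"
  then show fA: "f \<in> A \<Omega>" unfolding Hcont_def by simp
  fix x assume x: "x \<in> \<Omega>"
  have "Fop \<Omega> (pt \<Omega> u) = f" if "\<forall>y\<in>\<Omega>. isubset (pt \<Omega> u y) (f y)" for u
    using f pt_in_A that unfolding Hcont_def by blast
  then have "Fop \<Omega> (pt \<Omega> (\<lambda>y. fst (f y))) = f" and "Fop \<Omega> (pt \<Omega> (\<lambda>y. snd (f y))) = f"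
    using A_fst_le_snd[OF fA] by (simp_all add: isubset_def pt_def)
  then show "lower_envelope \<Omega> (\<lambda>y. snd (f y)) x = fst (f x)"
    and "upper_envelope \<Omega> (\<lambda>y. fst (f y)) x = snd (f x)"
    using Fop_pt[OF x] by (metis fst_conv, metis snd_conv)
next
  assume "f \<in> A \<Omega> \<and> (\<forall>x\<in>\<Omega>. lower_envelope \<Omega> (\<lambda>y. snd (f y)) x = fst (f x)
           \<and> upper_envelope \<Omega> (\<lambda>y. fst (f y)) x = snd (f x))"
  then have fA: "f \<in> A \<Omega>"
    and lower_snd: "\<And>x. x \<in> \<Omega> \<Longrightarrow> lower_envelope \<Omega> (\<lambda>y. snd (f y)) x = fst (f x)"
    and upper_fst: "\<And>x. x \<in> \<Omega> \<Longrightarrow> upper_envelope \<Omega> (\<lambda>y. fst (f y)) x = snd (f x)"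
    by auto
  have lower_fst: "lower_envelope \<Omega> (\<lambda>y. fst (f y)) x = fst (f x)" if "x \<in> \<Omega>" for x
    using lower_envelope_fixed[OF lower_snd[symmetric] that] .
  have upper_snd: "upper_envelope \<Omega> (\<lambda>y. snd (f y)) x = snd (f x)" if "x \<in> \<Omega>" for x
    using upper_envelope_fixed[OF upper_fst[symmetric] that] .
  have "Fop \<Omega> g = f" if g: "g \<in> A \<Omega>" and sub: "\<forall>x\<in>\<Omega>. isubset (g x) (f x)" for g
  proof
    fix x show "Fop \<Omega> g x = f x"
    proof (cases "x \<in> \<Omega>")
      case True
      have bounds: "fst (f y) \<le> fst (g y)" "fst (g y) \<le> snd (g y)" "snd (g y) \<le> snd (f y)"
        if "y \<in> \<Omega>" for y
        using sub A_fst_le_snd[OF g that] that unfolding isubset_def by auto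
      have "lower_envelope \<Omega> (\<lambda>y. fst (g y)) x = fst (f x)"
        using lower_envelope_mono[of \<Omega> "\<lambda>y. fst (f y)" "\<lambda>y. fst (g y)" x]
          lower_envelope_mono[of \<Omega> "\<lambda>y. fst (g y)" "\<lambda>y. snd (f y)" x]
          bounds lower_fst[OF True] lower_snd[OF True] by (force intro: antisym)
      moreover have "upper_envelope \<Omega> (\<lambda>y. snd (g y)) x = snd (f x)"
        using upper_envelope_mono[of \<Omega> "\<lambda>y. snd (g y)" "\<lambda>y. snd (f y)" x]
          upper_envelope_mono[of \<Omega> "\<lambda>y. fst (f y)" "\<lambda>y. snd (g y)" x]
          bounds upper_snd[OF True] upper_fst[OF True] by (force intro: antisym)
      ultimately show ?thesis by (simp add: Fop_eq_envelopes[OF g True])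
    next
      case False
      then show ?thesis using fA unfolding Fop_def A_def by simp
    qed
  qed
  then show "f \<in> Hcont \<Omega>" using fA unfolding Hcont_def by blast
qed

lemma Hcont_envelopes:
  assumes "f \<in> Hcont \<Omega>" and "x \<in> \<Omega>"
  shows "lower_envelope \<Omega> (\<lambda>y. snd (f y)) x = fst (f x)"
    and "upper_envelope \<Omega> (\<lambda>y. fst (f y)) x = snd (f x)"
    and "lower_envelope \<Omega> (\<lambda>y. fst (f y)) x = fst (f x)"
    and "upper_envelope \<Omega> (\<lambda>y. snd (f y)) x = snd (f x)"
proof -
  have lower_snd: "\<And>y. y \<in> \<Omega> \<Longrightarrow> lower_envelope \<Omega> (\<lambda>y. snd (f y)) y = fst (f y)"
    and upper_fst: "\<And>y. y \<in> \<Omega> \<Longrightarrow> upper_envelope \<Omega> (\<lambda>y. fst (f y)) y = snd (f y)"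
    using assms(1) unfolding Hcont_iff by auto
  show "lower_envelope \<Omega> (\<lambda>y. snd (f y)) x = fst (f x)"
    and "upper_envelope \<Omega> (\<lambda>y. fst (f y)) x = snd (f x)"
    using lower_snd upper_fst assms(2) by auto
  show "lower_envelope \<Omega> (\<lambda>y. fst (f y)) x = fst (f x)"
    using lower_envelope_fixed[OF lower_snd[symmetric] assms(2)] .
  show "upper_envelope \<Omega> (\<lambda>y. snd (f y)) x = snd (f x)"
    using upper_envelope_fixed[OF upper_fst[symmetric] assms(2)] .
qed

lemma Fop_pt_Hcont_if_lower_upper_fixed:
  assumes fixed: "\<And>x. x \<in> \<Omega> \<Longrightarrow> lower_envelope \<Omega> (upper_envelope \<Omega> u) x = u x"
  shows "Fop \<Omega> (pt \<Omega> u) \<in> Hcont \<Omega>"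
proof -
  let ?h = "Fop \<Omega> (pt \<Omega> u)"
  have h: "?h x = (u x, upper_envelope \<Omega> u x)" if "x \<in> \<Omega>" for x
    using Fop_pt[OF that] lower_envelope_fixed[OF fixed[symmetric] that] by simp
  have "?h \<in> A \<Omega>"
    using h upper_envelope_ge unfolding A_def by (auto simp: Fop_def)
  moreover have "lower_envelope \<Omega> (\<lambda>y. snd (?h y)) x = fst (?h x)"
    and "upper_envelope \<Omega> (\<lambda>y. fst (?h y)) x = snd (?h x)" if "x \<in> \<Omega>" for x
    using h fixed that lower_envelope_cong[of \<Omega> "\<lambda>y. snd (?h y)" "upper_envelope \<Omega> u" x]
      upper_envelope_cong[of \<Omega> "\<lambda>y. fst (?h y)" u x] by simp_all
  ultimately show ?thesis unfolding Hcont_iff by blast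
qed

lemma Fop_pt_Hcont_if_upper_lower_fixed:
  assumes fixed: "\<And>x. x \<in> \<Omega> \<Longrightarrow> upper_envelope \<Omega> (lower_envelope \<Omega> u) x = u x"
  shows "Fop \<Omega> (pt \<Omega> u) \<in> Hcont \<Omega>"
proof -
  let ?h = "Fop \<Omega> (pt \<Omega> u)"
  have h: "?h x = (lower_envelope \<Omega> u x, u x)" if "x \<in> \<Omega>" for x
    using Fop_pt[OF that] upper_envelope_fixed[OF fixed[symmetric] that] by simp
  have "?h \<in> A \<Omega>"
    using h lower_envelope_le unfolding A_def by (auto simp: Fop_def)
  moreover have "lower_envelope \<Omega> (\<lambda>y. snd (?h y)) x = fst (?h x)"
    and "upper_envelope \<Omega> (\<lambda>y. fst (?h y)) x = snd (?h x)" if "x \<in> \<Omega>" for x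
    using h fixed that lower_envelope_cong[of \<Omega> "\<lambda>y. snd (?h y)" u x]
      upper_envelope_cong[of \<Omega> "\<lambda>y. fst (?h y)" "lower_envelope \<Omega> u" x] by simp_all
  ultimately show ?thesis unfolding Hcont_iff by blast
qed

lemma is_inf_H_Fop_pt_lower_envelope:
  assumes \<F>: "\<F> \<subseteq> Hcont \<Omega>"
    and \<phi>: "\<And>x. x \<in> \<Omega> \<Longrightarrow> \<phi> x = (INF f\<in>\<F>. fst (f x))"
  shows "is_inf_H \<Omega> \<F> (Fop \<Omega> (pt \<Omega> (lower_envelope \<Omega> \<phi>)))"
proof -
  define a where "a = lower_envelope \<Omega> \<phi>"
  have a_le: "a x \<le> fst (f x)" if "x \<in> \<Omega>" "f \<in> \<F>" for x f
  proof -
    have "a x \<le> \<phi> x" unfolding a_def by (rule lower_envelope_le[OF that(1)])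
    also have "\<dots> \<le> fst (f x)" unfolding \<phi>[OF that(1)] by (rule INF_lower[OF that(2)])
    finally show ?thesis .
  qed
  have upper_a_le: "upper_envelope \<Omega> a x \<le> snd (f x)" if "x \<in> \<Omega>" "f \<in> \<F>" for x f
  proof -
    have "upper_envelope \<Omega> a x \<le> upper_envelope \<Omega> (\<lambda>y. fst (f y)) x"
      by (rule upper_envelope_mono) (rule a_le[OF _ that(2)])
    also have "\<dots> = snd (f x)" by (rule Hcont_envelopes(2)[OF subsetD[OF \<F> that(2)] that(1)])
    finally show ?thesis .
  qed
  have lower_upper_a_le: "lower_envelope \<Omega> (upper_envelope \<Omega> a) x \<le> \<phi> x" if x: "x \<in> \<Omega>" for x
    unfolding \<phi>[OF x]
  proof (rule INF_greatest)
    fix f assume f: "f \<in> \<F>"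
    have "lower_envelope \<Omega> (upper_envelope \<Omega> a) x \<le> lower_envelope \<Omega> (\<lambda>y. snd (f y)) x"
      by (rule lower_envelope_mono) (rule upper_a_le[OF _ f])
    also have "\<dots> = fst (f x)" by (rule Hcont_envelopes(1)[OF subsetD[OF \<F> f] x])
    finally show "lower_envelope \<Omega> (upper_envelope \<Omega> a) x \<le> fst (f x)" .
  qed
  have fixed: "lower_envelope \<Omega> (upper_envelope \<Omega> a) x = a x" if x: "x \<in> \<Omega>" for x
  proof (rule antisym)
    have "lower_envelope \<Omega> (upper_envelope \<Omega> a) x
        = lower_envelope \<Omega> (lower_envelope \<Omega> (upper_envelope \<Omega> a)) x"
      by (rule lower_envelope_idem[OF x, symmetric])
    also have "\<dots> \<le> lower_envelope \<Omega> \<phi> x"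
      by (rule lower_envelope_mono) (rule lower_upper_a_le)
    finally show "lower_envelope \<Omega> (upper_envelope \<Omega> a) x \<le> a x" unfolding a_def .
    have "a x = lower_envelope \<Omega> a x" unfolding a_def by (rule lower_envelope_idem[OF x, symmetric])
    also have "\<dots> \<le> lower_envelope \<Omega> (upper_envelope \<Omega> a) x"
      by (rule lower_envelope_mono) (rule upper_envelope_ge)
    finally show "a x \<le> lower_envelope \<Omega> (upper_envelope \<Omega> a) x" .
  qed
  have h: "Fop \<Omega> (pt \<Omega> a) x = (a x, upper_envelope \<Omega> a x)" if x: "x \<in> \<Omega>" for x
    using Fop_pt[OF x] lower_envelope_idem[OF x] unfolding a_def by simp
  have greatest: "ile \<Omega> g (Fop \<Omega> (pt \<Omega> a))" if g: "g \<in> Hcont \<Omega>" "\<forall>f\<in>\<F>. ile \<Omega> g f" for g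
  proof -
    have g_le_\<phi>: "fst (g x) \<le> \<phi> x" if "x \<in> \<Omega>" for x
      using g(2) that unfolding \<phi>[OF that] ile_def by (blast intro: INF_greatest)
    have g_le_a: "fst (g x) \<le> a x" if x: "x \<in> \<Omega>" for x
    proof -
      have "fst (g x) = lower_envelope \<Omega> (\<lambda>y. fst (g y)) x"
        by (rule Hcont_envelopes(3)[OF g(1) x, symmetric])
      also have "\<dots> \<le> a x" unfolding a_def by (rule lower_envelope_mono) (rule g_le_\<phi>)
      finally show ?thesis .
    qed
    have "snd (g x) \<le> upper_envelope \<Omega> a x" if x: "x \<in> \<Omega>" for x
    proof -
      have "snd (g x) = upper_envelope \<Omega> (\<lambda>y. fst (g y)) x"
        by (rule Hcont_envelopes(2)[OF g(1) x, symmetric])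
      also have "\<dots> \<le> upper_envelope \<Omega> a x" by (rule upper_envelope_mono) (rule g_le_a)
      finally show ?thesis .
    qed
    then show ?thesis using g_le_a h unfolding ile_def by simp
  qed
  show ?thesis unfolding is_inf_H_def a_def[symmetric]
    using Fop_pt_Hcont_if_lower_upper_fixed[OF fixed] h a_le upper_a_le greatest
    by (simp add: ile_def)
qed

lemma is_sup_H_Fop_pt_upper_envelope:
  assumes \<F>: "\<F> \<subseteq> Hcont \<Omega>"
    and \<psi>: "\<And>x. x \<in> \<Omega> \<Longrightarrow> \<psi> x = (SUP f\<in>\<F>. snd (f x))"
  shows "is_sup_H \<Omega> \<F> (Fop \<Omega> (pt \<Omega> (upper_envelope \<Omega> \<psi>)))"
proof -
  define b where "b = upper_envelope \<Omega> \<psi>"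
  have b_ge: "snd (f x) \<le> b x" if "x \<in> \<Omega>" "f \<in> \<F>" for x f
  proof -
    have "snd (f x) \<le> \<psi> x" unfolding \<psi>[OF that(1)] by (rule SUP_upper[OF that(2)])
    also have "\<dots> \<le> b x" unfolding b_def by (rule upper_envelope_ge[OF that(1)])
    finally show ?thesis .
  qed
  have lower_b_ge: "fst (f x) \<le> lower_envelope \<Omega> b x" if "x \<in> \<Omega>" "f \<in> \<F>" for x f
  proof -
    have "fst (f x) = lower_envelope \<Omega> (\<lambda>y. snd (f y)) x"
      by (rule Hcont_envelopes(1)[OF subsetD[OF \<F> that(2)] that(1), symmetric])
    also have "\<dots> \<le> lower_envelope \<Omega> b x" by (rule lower_envelope_mono) (rule b_ge[OF _ that(2)])
    finally show ?thesis .
  qed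
  have \<psi>_le_upper_lower_b: "\<psi> x \<le> upper_envelope \<Omega> (lower_envelope \<Omega> b) x" if x: "x \<in> \<Omega>" for x
    unfolding \<psi>[OF x]
  proof (rule SUP_least)
    fix f assume f: "f \<in> \<F>"
    have "snd (f x) = upper_envelope \<Omega> (\<lambda>y. fst (f y)) x"
      by (rule Hcont_envelopes(2)[OF subsetD[OF \<F> f] x, symmetric])
    also have "\<dots> \<le> upper_envelope \<Omega> (lower_envelope \<Omega> b) x"
      by (rule upper_envelope_mono) (rule lower_b_ge[OF _ f])
    finally show "snd (f x) \<le> upper_envelope \<Omega> (lower_envelope \<Omega> b) x" .
  qed
  have fixed: "upper_envelope \<Omega> (lower_envelope \<Omega> b) x = b x" if x: "x \<in> \<Omega>" for x
  proof (rule antisym)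
    have "upper_envelope \<Omega> (lower_envelope \<Omega> b) x \<le> upper_envelope \<Omega> b x"
      by (rule upper_envelope_mono) (rule lower_envelope_le)
    also have "\<dots> = b x" unfolding b_def by (rule upper_envelope_idem[OF x])
    finally show "upper_envelope \<Omega> (lower_envelope \<Omega> b) x \<le> b x" .
    have "upper_envelope \<Omega> \<psi> x \<le> upper_envelope \<Omega> (upper_envelope \<Omega> (lower_envelope \<Omega> b)) x"
      by (rule upper_envelope_mono) (rule \<psi>_le_upper_lower_b)
    also have "\<dots> = upper_envelope \<Omega> (lower_envelope \<Omega> b) x" by (rule upper_envelope_idem[OF x])
    finally show "b x \<le> upper_envelope \<Omega> (lower_envelope \<Omega> b) x" unfolding b_def .
  qed
  have h: "Fop \<Omega> (pt \<Omega> b) x = (lower_envelope \<Omega> b x, b x)" if x: "x \<in> \<Omega>" for x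
    using Fop_pt[OF x] upper_envelope_idem[OF x] unfolding b_def by simp
  have least: "ile \<Omega> (Fop \<Omega> (pt \<Omega> b)) g" if g: "g \<in> Hcont \<Omega>" "\<forall>f\<in>\<F>. ile \<Omega> f g" for g
  proof -
    have \<psi>_le_g: "\<psi> x \<le> snd (g x)" if "x \<in> \<Omega>" for x
      using g(2) that unfolding \<psi>[OF that] ile_def by (blast intro: SUP_least)
    have b_le_g: "b x \<le> snd (g x)" if x: "x \<in> \<Omega>" for x
    proof -
      have "b x \<le> upper_envelope \<Omega> (\<lambda>y. snd (g y)) x"
        unfolding b_def by (rule upper_envelope_mono) (rule \<psi>_le_g)
      also have "\<dots> = snd (g x)" by (rule Hcont_envelopes(4)[OF g(1) x])
      finally show ?thesis .
    qed
    have "lower_envelope \<Omega> b x \<le> fst (g x)" if x: "x \<in> \<Omega>" for x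
    proof -
      have "lower_envelope \<Omega> b x \<le> lower_envelope \<Omega> (\<lambda>y. snd (g y)) x"
        by (rule lower_envelope_mono) (rule b_le_g)
      also have "\<dots> = fst (g x)" by (rule Hcont_envelopes(1)[OF g(1) x])
      finally show ?thesis .
    qed
    then show ?thesis using b_le_g h unfolding ile_def by simp
  qed
  show ?thesis unfolding is_sup_H_def b_def[symmetric]
    using Fop_pt_Hcont_if_upper_lower_fixed[OF fixed] h b_ge lower_b_ge least
    by (simp add: ile_def)
qed

theorem theorem9:
  fixes \<Omega> :: "(real ^ 'n) set" and \<F> :: "(real ^ 'n) ifun set"
    and \<phi> \<psi> :: "real ^ 'n \<Rightarrow> ereal"
  assumes "open \<Omega>"
    and "\<F> \<subseteq> Hcont \<Omega>"
    and "\<And>x. x \<in> \<Omega> \<Longrightarrow> \<phi> x = Inf {z. \<exists>f\<in>\<F>. imem z (f x)}"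
    and "\<And>x. x \<in> \<Omega> \<Longrightarrow> \<psi> x = Sup {z. \<exists>f\<in>\<F>. imem z (f x)}"
  shows "is_inf_H \<Omega> \<F> (Fop \<Omega> (pt \<Omega> (Ilow \<Omega> (pt \<Omega> \<phi>))))
       \<and> is_sup_H \<Omega> \<F> (Fop \<Omega> (pt \<Omega> (Supp \<Omega> (pt \<Omega> \<psi>))))"
proof -
  have interval: "fst (f x) \<le> snd (f x)" if "x \<in> \<Omega>" "f \<in> \<F>" for x f
    using subsetD[OF assms(2) that(2)] that(1) by (simp add: Hcont_def A_def)
  have \<phi>: "\<phi> x = (INF f\<in>\<F>. fst (f x))" if "x \<in> \<Omega>" for x
    using assms(3)[OF that] Inf_imem[of \<F> "\<lambda>f. f x"] interval[OF that] by simp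
  have \<psi>: "\<psi> x = (SUP f\<in>\<F>. snd (f x))" if "x \<in> \<Omega>" for x
    using assms(4)[OF that] Sup_imem[of \<F> "\<lambda>f. f x"] interval[OF that] by simp
  show ?thesis
    using is_inf_H_Fop_pt_lower_envelope[OF assms(2) \<phi>]
      is_sup_H_Fop_pt_upper_envelope[OF assms(2) \<psi>]
    by (simp add: Ilow_pt Supp_pt)
qed

end
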